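(* There is an absolute constant $C>0$ such that for every integer $n\ge 2$, the cat can localize the mouse up to distance $8$ within time $C\log n$ on the grid $P_n\Box P_n$.
   Context: $P_n\Box P_n$ is the graph with vertex set $[n]\times[n]$ in which $(x,y)$ and $(x',y')$ are adjacent iff $|x-x'|+|y-y'|=1$. All graphs are finite, simple, undirected and connected. The game is played on a graph $G$ in discrete rounds $i=1,2,\ldots$. A game on $G$ is a pair of sequences $((m_i)_{i\in\mathbb N},(c_i)_{i\in\mathbb N})$ of vertices of $G$ such that $m_i\in N_G[m_{i-1}]$ (the closed neighborhood) for every $i\ge 2$; the $m_i$ are the mouse's positions and the $c_i$ (arbitrary vertices) are the cat's probes. Let $d_i=\mathrm{dist}_G(c_i,m_i)$, and for $i\ge2$ let $b_i=1$ if $d_i\le d_{i-1}$ and $b_i=0$ if $d_i>d_{i-1}$. The set $M_i$ is the set of all vertices $u$ for which there exist vertices $\tilde m_1,\ldots,\tilde m_i$ with $\tilde m_i=u$, $\tilde m_j\in N_G[\tilde m_{j-1}]$ for all $2\le j\le i$, and $\mathrm{dist}_G(c_j,\tilde m_j)\le \mathrm{dist}_G(c_{j-1},\tilde m_{j-1})$ if and only if $b_j=1$, for all $2\le j\le i$. For a vertex set $M$, $\mathrm{rad}_G(M)=\min_{u\in V(G)}\max_{m\in M}\mathrm{dist}_G(u,m)$. A strategy for the cat is a triple $(c_1,c_2;f)$ with $c_1,c_2\in V(G)$ and $f:\bigcup_{i\in\mathbb N}\{0,1\}^i\to V(G)$; the cat follows it in a game if its first two probes are $c_1,c_2$ and $c_{i+1}=f(b_2,\ldots,b_i)$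 for all $i\ge2$. The cat can localize the mouse up to distance $d$ within time $t$ on $G$ if there is a strategy $\sigma$ such that for every game on $G$ in which the cat follows $\sigma$, there is a positive integer $i\le t$ with $\mathrm{rad}_G(M_i)\le d$. *)

theory Defs
  imports Complex_Main
begin

fun walk :: "('a \<Rightarrow> 'a \<Rightarrow> bool) \<Rightarrow> nat \<Rightarrow> 'a \<Rightarrow> 'a \<Rightarrow> bool" where
  "walk E 0 u v = (u = v)"
| "walk E (Suc k) u v = (\<exists>w. E u w \<and> walk E k w v)"

definition gdist :: "('a \<Rightarrow> 'a \<Rightarrow> bool) \<Rightarrow> 'a \<Rightarrow> 'a \<Rightarrow> nat" where
  "gdist E u v = (LEAST k. walk E k u v)"

definition cnbhd :: "('a \<Rightarrow> 'a \<Rightarrow> bool) \<Rightarrow> 'a \<Rightarrow> 'a set" where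
  "cnbhd E u = {v. v = u \<or> E u v}"

text \<open>A game: mouse positions m and cat probes c, indexed from 1 (index 0 unused).\<close>
definition is_game :: "'a set \<Rightarrow> ('a \<Rightarrow> 'a \<Rightarrow> bool) \<Rightarrow> (nat \<Rightarrow> 'a) \<Rightarrow> (nat \<Rightarrow> 'a) \<Rightarrow> bool" where
  "is_game V E m c \<longleftrightarrow>
     (\<forall>i\<ge>1. m i \<in> V \<and> c i \<in> V) \<and> (\<forall>i\<ge>2. m i \<in> cnbhd E (m (i - 1)))"

definition answer :: "('a \<Rightarrow> 'a \<Rightarrow> bool) \<Rightarrow> (nat \<Rightarrow> 'a) \<Rightarrow> (nat \<Rightarrow> 'a) \<Rightarrow> nat \<Rightarrow> bool" where
  "answer E m c i \<longleftrightarrow> gdist E (c i) (m i) \<le> gdist E (c (i - 1)) (m (i - 1))"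

definition possible_set :: "'a set \<Rightarrow> ('a \<Rightarrow> 'a \<Rightarrow> bool) \<Rightarrow> (nat \<Rightarrow> 'a) \<Rightarrow> (nat \<Rightarrow> 'a) \<Rightarrow> nat \<Rightarrow> 'a set" where
  "possible_set V E m c i = {u. \<exists>mt :: nat \<Rightarrow> 'a.
      mt i = u \<and> (\<forall>j. 1 \<le> j \<and> j \<le> i \<longrightarrow> mt j \<in> V)
      \<and> (\<forall>j. 2 \<le> j \<and> j \<le> i \<longrightarrow> mt j \<in> cnbhd E (mt (j - 1)))
      \<and> (\<forall>j. 2 \<le> j \<and> j \<le> i \<longrightarrow>
            ((gdist E (c j) (mt j) \<le> gdist E (c (j - 1)) (mt (j - 1))) \<longleftrightarrow> answer E m c j))}"

definition grad :: "'a set \<Rightarrow> ('a \<Rightarrow> 'a \<Rightarrow> bool) \<Rightarrow> 'a set \<Rightarrow> nat" where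
  "grad V E M = Min ((\<lambda>u. Max ((\<lambda>x. gdist E u x) ` M)) ` V)"

text \<open>A strategy (c1, c2, f); f is applied to the answer string (b_2,...,b_i).\<close>
definition is_strategy :: "'a set \<Rightarrow> 'a \<Rightarrow> 'a \<Rightarrow> (bool list \<Rightarrow> 'a) \<Rightarrow> bool" where
  "is_strategy V c1 c2 f \<longleftrightarrow> c1 \<in> V \<and> c2 \<in> V \<and> (\<forall>bs. f bs \<in> V)"

definition follows :: "('a \<Rightarrow> 'a \<Rightarrow> bool) \<Rightarrow> 'a \<Rightarrow> 'a \<Rightarrow> (bool list \<Rightarrow> 'a)
    \<Rightarrow> (nat \<Rightarrow> 'a) \<Rightarrow> (nat \<Rightarrow> 'a) \<Rightarrow> bool" where
  "follows E c1 c2 f m c \<longleftrightarrow> c 1 = c1 \<and> c 2 = c2 \<and>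
     (\<forall>i\<ge>2. c (Suc i) = f (map (answer E m c) [2..<Suc i]))"

definition can_localize :: "'a set \<Rightarrow> ('a \<Rightarrow> 'a \<Rightarrow> bool) \<Rightarrow> nat \<Rightarrow> real \<Rightarrow> bool" where
  "can_localize V E d t \<longleftrightarrow>
     (\<exists>c1 c2 f. is_strategy V c1 c2 f \<and>
        (\<forall>m c. is_game V E m c \<and> follows E c1 c2 f m c \<longrightarrow>
           (\<exists>i::nat. 1 \<le> i \<and> real i \<le> t \<and> grad V E (possible_set V E m c i) \<le> d)))"

definition grid_V :: "nat \<Rightarrow> (nat \<times> nat) set" where
  "grid_V n = {1..n} \<times> {1..n}"

definition grid_E :: "nat \<Rightarrow> nat \<times> nat \<Rightarrow> nat \<times> nat \<Rightarrow> bool" where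
  "grid_E n p q \<longleftrightarrow> p \<in> grid_V n \<and> q \<in> grid_V n \<and>
     \<bar>int (fst p) - int (fst q)\<bar> + \<bar>int (snd p) - int (snd q)\<bar> = 1"

end

theory Submission
  imports Defs
begin

text \<open>The cat keeps, for each coordinate of the mouse, an interval known to contain it; every
  round both intervals widen by one on each side, since the mouse may have moved. Probing (a, q)
  and then (b, q) with a + 2 \<le> b and comparing the two distances tells on which side of
  (a + b) / 2 the first coordinate of the mouse lies: the common second coordinate cancels, and the
  step of the mouse changes the comparison by at most one. A schedule of six rounds halves each
  interval twice, so a width w becomes at most (w + 25) / 4. After O(log n) schedules both widths
  are at most 8, and the centre of the remaining box is within distance 8 of every position still
  possible for the mouse.\<close>

section \<open>Distances in the grid\<close>

definition l1_dist :: "nat \<times> nat \<Rightarrow> nat \<times> nat \<Rightarrow> int" where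
  "l1_dist p q = \<bar>int (fst p) - int (fst q)\<bar> + \<bar>int (snd p) - int (snd q)\<bar>"

lemma grid_E_iff: "grid_E n p q \<longleftrightarrow> p \<in> grid_V n \<and> q \<in> grid_V n \<and> l1_dist p q = 1"
  by (simp add: grid_E_def l1_dist_def)

lemma l1_dist_le_walk_length: "walk (grid_E n) k p q \<Longrightarrow> l1_dist p q \<le> int k"
proof (induction k arbitrary: p)
  case (Suc k)
  then obtain w where "l1_dist p w = 1" "l1_dist w q \<le> int k"
    by (auto simp: grid_E_iff)
  then show ?case by (simp add: l1_dist_def)
qed (simp add: l1_dist_def)

text \<open>A shortest walk first corrects the first coordinate, then the second.\<close>
lemma walk_of_l1_dist:
  "p \<in> grid_V n \<Longrightarrow> q \<in> grid_V n \<Longrightarrow> l1_dist p q = int k \<Longrightarrow> walk (grid_E n) k p q"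
proof (induction k arbitrary: p)
  case 0
  then show ?case by (simp add: l1_dist_def prod_eq_iff abs_if split: if_splits)
next
  case (Suc k)
  obtain a b where p: "p = (a, b)" by fastforce
  define w where "w = (if a < fst q then (Suc a, b) else if fst q < a then (a - 1, b)
                       else if b < snd q then (a, Suc b) else (a, b - 1))"
  have "w \<in> grid_V n" "l1_dist w q = int k" "l1_dist p w = 1"
    using Suc.prems by (auto simp: p w_def grid_V_def l1_dist_def)
  then have "grid_E n p w" "walk (grid_E n) k w q"
    using Suc.IH[of w] Suc.prems(1,2) grid_E_iff[of n p w] by simp_all
  then show ?case by (auto simp del: split_paired_Ex)
qed

lemma gdist_grid_eq_l1_dist:
  assumes "p \<in> grid_V n" "q \<in> grid_V n"
  shows "int (gdist (grid_E n) p q) = l1_dist p q"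
proof -
  have nonneg: "0 \<le> l1_dist p q" by (simp add: l1_dist_def)
  have "gdist (grid_E n) p q = nat (l1_dist p q)"
    unfolding gdist_def
  proof (rule Least_equality)
    show "walk (grid_E n) (nat (l1_dist p q)) p q"
      using walk_of_l1_dist[OF assms] nonneg by simp
  qed (use l1_dist_le_walk_length in fastforce)
  then show ?thesis using nonneg by simp
qed

lemma l1_dist_le_1_if_cnbhd: "v \<in> cnbhd (grid_E n) u \<Longrightarrow> l1_dist v u \<le> 1"
  by (auto simp: cnbhd_def grid_E_iff l1_dist_def)

lemma interval_center:
  fixes lo hi x :: int and n :: nat
  assumes "x \<in> {lo..hi}" "x \<in> {1..int n}"
  obtains c where "c \<in> {1..int n}"
    "\<And>z. z \<in> {lo..hi} \<Longrightarrow> z \<in> {1..int n} \<Longrightarrow> \<bar>c - z\<bar> \<le> (hi - lo + 1) div 2"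
proof -
  define a where "a = max lo 1"
  define b where "b = min hi (int n)"
  have ab: "1 \<le> a" "a \<le> b" "b \<le> int n" "b - a \<le> hi - lo"
    using assms by (auto simp: a_def b_def)
  have halves: "2 * (k div 2) \<le> k" "k \<le> 2 * (k div 2) + 1" for k :: int
    by linarith+
  show ?thesis
  proof
    show "(a + b) div 2 \<in> {1..int n}"
      using ab halves[of "a + b"] by auto
    show "\<bar>(a + b) div 2 - z\<bar> \<le> (hi - lo + 1) div 2" if "z \<in> {lo..hi}" "z \<in> {1..int n}" for z
    proof -
      have "a \<le> z" "z \<le> b" using that by (auto simp: a_def b_def)
      then show ?thesis
        using ab halves[of "a + b"] halves[of "hi - lo + 1"] by linarith
    qed
  qed
qed

lemma grad_grid_le:
  assumes M: "M \<subseteq> grid_V n" "M \<noteq> {}"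
    and box: "\<And>p. p \<in> M \<Longrightarrow> int (fst p) \<in> {xl..xh} \<and> int (snd p) \<in> {yl..yh}"
    and small: "(xh - xl + 1) div 2 + (yh - yl + 1) div 2 \<le> int d"
  shows "grad (grid_V n) (grid_E n) M \<le> d"
proof -
  have coords: "int (fst p) \<in> {xl..xh}" "int (fst p) \<in> {1..int n}"
      "int (snd p) \<in> {yl..yh}" "int (snd p) \<in> {1..int n}" if "p \<in> M" for p
    using that box M(1) by (auto simp: grid_V_def)
  obtain p0 where p0: "p0 \<in> M" using M(2) by blast
  obtain cx where cx: "cx \<in> {1..int n}"
    "\<And>z. z \<in> {xl..xh} \<Longrightarrow> z \<in> {1..int n} \<Longrightarrow> \<bar>cx - z\<bar> \<le> (xh - xl + 1) div 2"
    using interval_center[OF coords(1,2)[OF p0]] by blast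
  obtain cy where cy: "cy \<in> {1..int n}"
    "\<And>z. z \<in> {yl..yh} \<Longrightarrow> z \<in> {1..int n} \<Longrightarrow> \<bar>cy - z\<bar> \<le> (yh - yl + 1) div 2"
    using interval_center[OF coords(3,4)[OF p0]] by blast
  define u where "u = (nat cx, nat cy)"
  have u: "u \<in> grid_V n" using cx(1) cy(1) by (auto simp: u_def grid_V_def)
  have "gdist (grid_E n) u p \<le> d" if p: "p \<in> M" for p
  proof -
    have "int (gdist (grid_E n) u p) = \<bar>cx - int (fst p)\<bar> + \<bar>cy - int (snd p)\<bar>"
      using gdist_grid_eq_l1_dist[OF u, of p] M(1) p cx(1) cy(1)
      by (auto simp: l1_dist_def u_def)
    also have "\<dots> \<le> int d"
      using cx(2)[OF coords(1,2)[OF p]] cy(2)[OF coords(3,4)[OF p]] small by linarith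
    finally show ?thesis by simp
  qed
  then have "Max ((\<lambda>p. gdist (grid_E n) u p) ` M) \<le> d"
    using M finite_subset[OF M(1)] by (simp add: grid_V_def)
  moreover have "grad (grid_V n) (grid_E n) M \<le> Max ((\<lambda>p. gdist (grid_E n) u p) ` M)"
    unfolding grad_def using u by (intro Min_le) (auto simp: grid_V_def)
  ultimately show ?thesis by linarith
qed

lemma possible_set_subset: "1 \<le> i \<Longrightarrow> possible_set V E m c i \<subseteq> V"
  unfolding possible_set_def by auto

lemma mouse_in_possible_set: "is_game V E m c \<Longrightarrow> 1 \<le> i \<Longrightarrow> m i \<in> possible_set V E m c i"
  unfolding possible_set_def is_game_def answer_def by auto

lemma can_localize_mono: "can_localize V E d t \<Longrightarrow> t \<le> t' \<Longrightarrow> can_localize V E d t'"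
  unfolding can_localize_def by (meson order_trans)

lemma can_localize_small_grid:
  assumes "1 \<le> n" "n \<le> 9" "1 \<le> t"
  shows "can_localize (grid_V n) (grid_E n) 8 t"
  unfolding can_localize_def
proof (intro exI[of _ "(1, 1)"] exI[of _ "\<lambda>_. (1, 1)"] conjI allI impI)
  show "is_strategy (grid_V n) (1, 1) (1, 1) (\<lambda>_. (1, 1))"
    using assms(1) by (simp add: is_strategy_def grid_V_def)
  fix m c
  assume "is_game (grid_V n) (grid_E n) m c \<and>
    follows (grid_E n) (1, 1) (1, 1) (\<lambda>_. (1, 1)) m c"
  then have game: "is_game (grid_V n) (grid_E n) m c" by simp
  let ?M = "possible_set (grid_V n) (grid_E n) m c 1"
  have sub: "?M \<subseteq> grid_V n" by (rule possible_set_subset) simp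
  have "grad (grid_V n) (grid_E n) ?M \<le> 8"
  proof (rule grad_grid_le[OF sub])
    show "?M \<noteq> {}" using mouse_in_possible_set[OF game, of 1] by auto
    show "int (fst p) \<in> {1..int n} \<and> int (snd p) \<in> {1..int n}" if "p \<in> ?M" for p
      using that sub by (auto simp: grid_V_def)
    show "(int n - 1 + 1) div 2 + (int n - 1 + 1) div 2 \<le> int 8"
      using assms(2) by simp
  qed
  with assms(3) show "\<exists>i. 1 \<le> i \<and> real i \<le> t \<and>
      grad (grid_V n) (grid_E n) (possible_set (grid_V n) (grid_E n) m c i) \<le> 8"
    by (intro exI[of _ 1]) simp
qed

section \<open>Halving a range by two probes\<close>

lemma comparison_locates_coordinate:
  fixes a b q x y x' y' :: int
  assumes move: "\<bar>x - x'\<bar> + \<bar>y - y'\<bar> \<le> 1" and gap: "a + 2 \<le> b"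
  shows "\<bar>x - b\<bar> + \<bar>y - q\<bar> \<le> \<bar>x' - a\<bar> + \<bar>y' - q\<bar> \<Longrightarrow> (a + b) div 2 \<le> x"
    and "\<not> \<bar>x - b\<bar> + \<bar>y - q\<bar> \<le> \<bar>x' - a\<bar> + \<bar>y' - q\<bar> \<Longrightarrow> x \<le> (a + b) div 2"
proof -
  have "\<bar>x - b\<bar> + \<bar>y - q\<bar> \<le> \<bar>x' - a\<bar> + \<bar>y' - q\<bar> \<Longrightarrow> a + b \<le> 2 * x + 1"
    and "\<not> \<bar>x - b\<bar> + \<bar>y - q\<bar> \<le> \<bar>x' - a\<bar> + \<bar>y' - q\<bar> \<Longrightarrow> 2 * x \<le> a + b"
    using assms by (auto simp: abs_if split: if_splits)
  then show "\<bar>x - b\<bar> + \<bar>y - q\<bar> \<le> \<bar>x' - a\<bar> + \<bar>y' - q\<bar> \<Longrightarrow> (a + b) div 2 \<le> x"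
    and "\<not> \<bar>x - b\<bar> + \<bar>y - q\<bar> \<le> \<bar>x' - a\<bar> + \<bar>y' - q\<bar> \<Longrightarrow> x \<le> (a + b) div 2"
    by presburger+
qed

abbreviation ivl :: "int \<times> int \<Rightarrow> int set" where
  "ivl I \<equiv> {fst I..snd I}"

abbreviation width :: "int \<times> int \<Rightarrow> int" where
  "width I \<equiv> snd I - fst I"

definition split_sum :: "int \<Rightarrow> int \<times> int \<Rightarrow> int" where
  "split_sum N I = max 4 (min (2 * N - 2) (fst I + snd I))"

definition near_end :: "int \<Rightarrow> int \<times> int \<Rightarrow> int" where
  "near_end N I = max 1 (split_sum N I - N)"

definition far_end :: "int \<Rightarrow> int \<times> int \<Rightarrow> int" where
  "far_end N I = min N (split_sum N I - 1)"

definition halve :: "int \<Rightarrow> int \<times> int \<Rightarrow> bool \<Rightarrow> int \<times> int" where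
  "halve N I b = (if b then (max (fst I) (split_sum N I div 2), snd I)
                  else (fst I, min (snd I) (split_sum N I div 2)))"

definition drift :: "int \<Rightarrow> int \<times> int \<Rightarrow> int \<times> int" where
  "drift N I = (max 1 (fst I - 1), min N (snd I + 1))"

lemma near_end_far_end:
  assumes "3 \<le> N"
  shows "1 \<le> near_end N I" "near_end N I + 2 \<le> far_end N I" "far_end N I \<le> N"
    and "near_end N I + far_end N I = split_sum N I"
  using assms by (auto simp: near_end_def far_end_def split_sum_def)

lemma mem_halve:
  assumes "3 \<le> N" and "x \<in> ivl I" and "\<bar>x - x'\<bar> + \<bar>y - y'\<bar> \<le> 1"
  shows "x \<in> ivl (halve N I
           (\<bar>x - far_end N I\<bar> + \<bar>y - q\<bar> \<le> \<bar>x' - near_end N I\<bar> + \<bar>y' - q\<bar>))"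
  using comparison_locates_coordinate[OF assms(3) near_end_far_end(2)[OF assms(1)]]
    near_end_far_end(4)[OF assms(1)] assms(2)
  by (auto simp: halve_def)

lemma mem_drift: "x' \<in> ivl I \<Longrightarrow> \<bar>x - x'\<bar> \<le> 1 \<Longrightarrow> x \<in> {1..N} \<Longrightarrow> x \<in> ivl (drift N I)"
  by (auto simp: drift_def)

lemma width_drift: "width (drift N I) \<le> width I + 2"
  by (simp add: drift_def)

lemma width_halve:
  assumes "1 \<le> fst I" "snd I \<le> N"
  shows "width (halve N I b) \<le> (width I + 1) div 2"
proof -
  obtain lo hi where I: "I = (lo, hi)" by fastforce
  have "lo + hi < 4 \<or> 2 * N - 2 < lo + hi \<or> split_sum N I = lo + hi"
    by (auto simp: split_sum_def I)
  then show ?thesis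
    using assms unfolding halve_def I by (auto simp: split_sum_def)
qed

lemma width_halve_drift: "width (halve N (drift N I) b) \<le> (width I + 3) div 2"
proof -
  have "width (halve N (drift N I) b) \<le> (width (drift N I) + 1) div 2"
    by (rule width_halve) (simp_all add: drift_def)
  also have "\<dots> \<le> (width I + 3) div 2"
    using width_drift[of N I] by (simp add: zdiv_mono1)
  finally show ?thesis .
qed

section \<open>Contraction of the widths\<close>

lemma six_round_contraction:
  fixes w :: "nat \<Rightarrow> int"
  assumes step: "\<And>i. w (Suc i) \<le> (if i mod 6 \<in> H then (w i + 3) div 2 else w i + 2)"
    and H: "H = {1, 5} \<or> H = {2, 4}"
  shows "4 * w (6 * Suc k) \<le> w (6 * k) + 25"
proof -
  have "w (6 * k + Suc r) \<le> (if r \<in> H then (w (6 * k + r) + 3) div 2 else w (6 * k + r) + 2)"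
    if "r < 6" for r
    using step[of "6 * k + r"] that by simp
  from this[of 0] this[of 1] this[of 2] this[of 3] this[of 4] this[of 5] H
  have "4 * w (6 * k + 6) \<le> w (6 * k) + 25" by auto
  then show ?thesis by (simp add: add.commute)
qed

text \<open>The quantity 3 w - 25 shrinks by a factor of 4 in each step; once it is below 1, w \<le> 8.\<close>
lemma contraction_reaches_8:
  fixes w :: "nat \<Rightarrow> int"
  assumes step: "\<And>k. 4 * w (Suc k) \<le> w k + 25" and large: "3 * (w 0 + 1) < 4 ^ K"
  shows "w K \<le> 8"
proof -
  have decay: "4 ^ k * (3 * w k - 25) \<le> 3 * w 0 - 25" for k
  proof (induction k)
    case (Suc k)
    have "4 ^ Suc k * (3 * w (Suc k) - 25) \<le> 4 ^ k * (3 * w k - 25)"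
      using mult_left_mono[OF step[of k], of "3 * 4 ^ k"] by (simp add: algebra_simps)
    with Suc.IH show ?case by linarith
  qed simp
  show ?thesis
  proof (rule ccontr)
    assume "\<not> w K \<le> 8"
    then have "4 ^ K \<le> (4 :: int) ^ K * (3 * w K - 25)" by simp
    also have "\<dots> \<le> 3 * w 0 - 25" by (rule decay)
    finally show False using large by arith
  qed
qed

section \<open>The strategy of the cat\<close>

lemma mod_eq_SucE:
  fixes i m k :: nat
  assumes "i mod m = Suc k"
  obtains j where "i = Suc j" "j mod m = k"
proof (cases i)
  case (Suc j)
  then have "j mod m = k"
    using assms by (auto simp: mod_Suc split: if_splits)
  with Suc show thesis by (rule that)
qed (use assms in simp)

datatype cat_state =
  Cat_State (x_range: "int \<times> int") (y_range: "int \<times> int") (last_probe: "int \<times> int")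

definition initial_state :: "int \<Rightarrow> cat_state" where
  "initial_state N = Cat_State (1, N) (1, N) (1, 1)"

text \<open>Round i + 1 is played in phase i mod 6. In phases 1 and 5 the cat probes the far end of
  the x-range in the row of its previous probe, whose x-coordinate is the matching near end; phases
  2 and 4 do the same for y. Phases 0 and 3 place these near ends in advance, for the ranges as they
  will be after the widenings in between.\<close>
definition next_probe :: "int \<Rightarrow> nat \<Rightarrow> cat_state \<Rightarrow> int \<times> int" where
  "next_probe N i s =
    (if i mod 6 = 0 then
       (near_end N (drift N (drift N (x_range s))),
        near_end N (drift N (drift N (drift N (y_range s)))))
     else if i mod 6 = 3 then
       (near_end N (drift N (drift N (drift N (x_range s)))),
        near_end N (drift N (drift N (y_range s))))
     else if i mod 6 \<in> {1, 5} then (far_end N (drift N (x_range s)), snd (last_probe s))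
     else (fst (last_probe s), far_end N (drift N (y_range s))))"

definition cat_round :: "int \<Rightarrow> nat \<Rightarrow> cat_state \<Rightarrow> bool \<Rightarrow> cat_state" where
  "cat_round N i s b = Cat_State
     (if i mod 6 \<in> {1, 5} then halve N (drift N (x_range s)) b else drift N (x_range s))
     (if i mod 6 \<in> {2, 4} then halve N (drift N (y_range s)) b else drift N (y_range s))
     (next_probe N i s)"

fun cat_run :: "int \<Rightarrow> (nat \<Rightarrow> bool) \<Rightarrow> nat \<Rightarrow> cat_state" where
  "cat_run N B 0 = initial_state N"
| "cat_run N B (Suc i) = cat_round N i (cat_run N B i) (B (Suc i))"

lemma cat_run_cong:
  "(\<And>j. 2 \<le> j \<Longrightarrow> j \<le> i \<Longrightarrow> B j = B' j) \<Longrightarrow> cat_run N B i = cat_run N B' i"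
proof (induction i)
  case (Suc i)
  then show ?case
    by (cases "i = 0") (simp_all add: cat_round_def)
qed simp

lemma near_end_before_comparison:
  shows "i mod 6 \<in> {1, 5} \<Longrightarrow>
           fst (last_probe (cat_run N B i)) = near_end N (drift N (x_range (cat_run N B i)))"
    and "i mod 6 \<in> {2, 4} \<Longrightarrow>
           snd (last_probe (cat_run N B i)) = near_end N (drift N (y_range (cat_run N B i)))"
proof -
  show "fst (last_probe (cat_run N B i)) = near_end N (drift N (x_range (cat_run N B i)))"
    if "i mod 6 \<in> {1, 5}"
  proof (cases "i mod 6 = 1")
    case True
    then have "i mod 6 = Suc 0" by simp
    then obtain j where "i = Suc j" "j mod 6 = 0" by (rule mod_eq_SucE)
    then show ?thesis by (simp add: cat_round_def next_probe_def)
  next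
    case False
    with that have "i mod 6 = Suc 4" by simp
    then obtain j where i: "i = Suc j" and j: "j mod 6 = 4" by (rule mod_eq_SucE)
    from j have "j mod 6 = Suc 3" by simp
    then obtain k where "j = Suc k" "k mod 6 = 3" by (rule mod_eq_SucE)
    with i j show ?thesis by (simp add: cat_round_def next_probe_def)
  qed
  show "snd (last_probe (cat_run N B i)) = near_end N (drift N (y_range (cat_run N B i)))"
    if "i mod 6 \<in> {2, 4}"
  proof (cases "i mod 6 = 4")
    case True
    then have "i mod 6 = Suc 3" by simp
    then obtain j where "i = Suc j" "j mod 6 = 3" by (rule mod_eq_SucE)
    then show ?thesis by (simp add: cat_round_def next_probe_def)
  next
    case False
    with that have "i mod 6 = Suc 1" by simp
    then obtain j where i: "i = Suc j" and j: "j mod 6 = 1" by (rule mod_eq_SucE)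
    from j have "j mod 6 = Suc 0" by simp
    then obtain k where "j = Suc k" "k mod 6 = 0" by (rule mod_eq_SucE)
    with i j show ?thesis by (simp add: cat_round_def next_probe_def)
  qed
qed

definition to_vertex :: "int \<times> int \<Rightarrow> nat \<times> nat" where
  "to_vertex p = (nat (fst p), nat (snd p))"

lemma to_vertex_in_grid: "p \<in> {1..int n} \<times> {1..int n} \<Longrightarrow> to_vertex p \<in> grid_V n"
  by (auto simp: to_vertex_def grid_V_def)

lemma gdist_to_vertex_le_iff:
  assumes "p \<in> {1..int n} \<times> {1..int n}" "p' \<in> {1..int n} \<times> {1..int n}"
    and "v \<in> grid_V n" "v' \<in> grid_V n"
  shows "gdist (grid_E n) (to_vertex p) v \<le> gdist (grid_E n) (to_vertex p') v' \<longleftrightarrow>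
    \<bar>int (fst v) - fst p\<bar> + \<bar>int (snd v) - snd p\<bar>
      \<le> \<bar>int (fst v') - fst p'\<bar> + \<bar>int (snd v') - snd p'\<bar>"
proof -
  have "int (gdist (grid_E n) (to_vertex q) u) =
      \<bar>int (fst u) - fst q\<bar> + \<bar>int (snd u) - snd q\<bar>"
    if "q \<in> {1..int n} \<times> {1..int n}" "u \<in> grid_V n" for q u
    using gdist_grid_eq_l1_dist[OF to_vertex_in_grid[OF that(1)] that(2)] that(1)
    by (auto simp: l1_dist_def to_vertex_def abs_minus_commute)
  from this[OF assms(1,3)] this[OF assms(2,4)] show ?thesis
    by (metis of_nat_le_iff)
qed

lemma next_probe_in_box:
  assumes "3 \<le> N" "last_probe s \<in> {1..N} \<times> {1..N}"
  shows "next_probe N i s \<in> {1..N} \<times> {1..N}"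
proof -
  have "near_end N I \<in> {1..N}" "far_end N I \<in> {1..N}" for I
    using near_end_far_end[OF assms(1), of I] by auto
  with assms(2) show ?thesis by (auto simp: next_probe_def)
qed

lemma last_probe_cat_run_in_box: "3 \<le> N \<Longrightarrow> last_probe (cat_run N B i) \<in> {1..N} \<times> {1..N}"
  by (induction i) (auto simp: initial_state_def cat_round_def next_probe_in_box)

lemma cat_round_keeps_mouse:
  fixes x y x' y' :: int
  assumes N: "3 \<le> N"
    and old: "x' \<in> ivl (x_range s)" "y' \<in> ivl (y_range s)"
    and move: "\<bar>x - x'\<bar> + \<bar>y - y'\<bar> \<le> 1" "x \<in> {1..N}" "y \<in> {1..N}"
    and near: "i mod 6 \<in> {1, 5} \<Longrightarrow> fst (last_probe s) = near_end N (drift N (x_range s))"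
      "i mod 6 \<in> {2, 4} \<Longrightarrow> snd (last_probe s) = near_end N (drift N (y_range s))"
    and answer: "b \<longleftrightarrow> \<bar>x - fst (next_probe N i s)\<bar> + \<bar>y - snd (next_probe N i s)\<bar>
                    \<le> \<bar>x' - fst (last_probe s)\<bar> + \<bar>y' - snd (last_probe s)\<bar>"
  shows "x \<in> ivl (x_range (cat_round N i s b)) \<and> y \<in> ivl (y_range (cat_round N i s b))"
proof
  have drifted: "x \<in> ivl (drift N (x_range s))" "y \<in> ivl (drift N (y_range s))"
    using mem_drift old move by auto
  show "x \<in> ivl (x_range (cat_round N i s b))"
  proof (cases "i mod 6 \<in> {1, 5}")
    case True
    with answer near(1) have "b \<longleftrightarrow>
      \<bar>x - far_end N (drift N (x_range s))\<bar> + \<bar>y - snd (last_probe s)\<bar>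
        \<le> \<bar>x' - near_end N (drift N (x_range s))\<bar> + \<bar>y' - snd (last_probe s)\<bar>"
      by (auto simp: next_probe_def)
    with True show ?thesis
      using mem_halve[OF N drifted(1) move(1)] by (simp add: cat_round_def)
  qed (use drifted in \<open>auto simp: cat_round_def\<close>)
  show "y \<in> ivl (y_range (cat_round N i s b))"
  proof (cases "i mod 6 \<in> {2, 4}")
    case True
    with answer near(2) have "b \<longleftrightarrow>
      \<bar>y - far_end N (drift N (y_range s))\<bar> + \<bar>x - fst (last_probe s)\<bar>
        \<le> \<bar>y' - near_end N (drift N (y_range s))\<bar> + \<bar>x' - fst (last_probe s)\<bar>"
      by (auto simp: next_probe_def add.commute)
    with True show ?thesis
      using mem_halve[OF N drifted(2), of y' x x'] move(1)
      by (simp add: cat_round_def add.commute)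
  qed (use drifted in \<open>auto simp: cat_round_def\<close>)
qed

lemma trajectory_in_ranges:
  assumes N: "N = int n" "3 \<le> n"
    and probes: "\<And>j. 1 \<le> j \<Longrightarrow> c j = to_vertex (last_probe (cat_run N B j))"
  shows "1 \<le> i \<Longrightarrow> (\<forall>j. 1 \<le> j \<and> j \<le> i \<longrightarrow> mt j \<in> grid_V n)
    \<Longrightarrow> (\<forall>j. 2 \<le> j \<and> j \<le> i \<longrightarrow> mt j \<in> cnbhd (grid_E n) (mt (j - 1)))
    \<Longrightarrow> (\<forall>j. 2 \<le> j \<and> j \<le> i \<longrightarrow>
          (gdist (grid_E n) (c j) (mt j) \<le> gdist (grid_E n) (c (j - 1)) (mt (j - 1))) = B j)
    \<Longrightarrow> int (fst (mt i)) \<in> ivl (x_range (cat_run N B i))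
        \<and> int (snd (mt i)) \<in> ivl (y_range (cat_run N B i))"
proof (induction i)
  case (Suc i)
  have mt_Suc: "mt (Suc i) \<in> grid_V n"
    using Suc.prems(2) by simp
  show ?case
  proof (cases "i = 0")
    case True
    with mt_Suc N show ?thesis
      by (auto simp: cat_round_def initial_state_def drift_def grid_V_def)
  next
    case False
    let ?s = "cat_run N B i"
    have mt_i: "mt i \<in> grid_V n"
      using Suc.prems(2) False by simp
    have in_ranges: "int (fst (mt i)) \<in> ivl (x_range ?s)" "int (snd (mt i)) \<in> ivl (y_range ?s)"
      using Suc.IH Suc.prems False by auto
    have move: "mt (Suc i) \<in> cnbhd (grid_E n) (mt i)"
      using Suc.prems(3)[rule_format, of "Suc i"] False by simp
    have box: "last_probe ?s \<in> {1..int n} \<times> {1..int n}"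
        "next_probe N i ?s \<in> {1..int n} \<times> {1..int n}"
      using last_probe_cat_run_in_box[of N B] next_probe_in_box[of N] N by auto
    have "B (Suc i) \<longleftrightarrow>
        gdist (grid_E n) (c (Suc i)) (mt (Suc i)) \<le> gdist (grid_E n) (c i) (mt i)"
      using Suc.prems(4)[rule_format, of "Suc i"] False by simp
    moreover have "c (Suc i) = to_vertex (next_probe N i ?s)" "c i = to_vertex (last_probe ?s)"
      using probes False by (simp_all add: cat_round_def)
    ultimately have answer: "B (Suc i) \<longleftrightarrow>
        \<bar>int (fst (mt (Suc i))) - fst (next_probe N i ?s)\<bar>
          + \<bar>int (snd (mt (Suc i))) - snd (next_probe N i ?s)\<bar>
        \<le> \<bar>int (fst (mt i)) - fst (last_probe ?s)\<bar> + \<bar>int (snd (mt i)) - snd (last_probe ?s)\<bar>"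
      using gdist_to_vertex_le_iff[OF box(2,1) mt_Suc mt_i] by simp
    have step: "\<bar>int (fst (mt (Suc i))) - int (fst (mt i))\<bar>
        + \<bar>int (snd (mt (Suc i))) - int (snd (mt i))\<bar> \<le> 1"
      using l1_dist_le_1_if_cnbhd[OF move] by (simp add: l1_dist_def)
    have "int (fst (mt (Suc i))) \<in> {1..N}" "int (snd (mt (Suc i))) \<in> {1..N}"
      using mt_Suc N by (auto simp: grid_V_def)
    then show ?thesis
      using cat_round_keeps_mouse[OF _ in_ranges step _ _ near_end_before_comparison answer] N
      by simp
  qed
qed simp

lemma possible_set_in_ranges:
  assumes "N = int n" "3 \<le> n" "1 \<le> i"
    and "\<And>j. 1 \<le> j \<Longrightarrow> c j = to_vertex (last_probe (cat_run N (answer (grid_E n) m c) j))"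
    and "u \<in> possible_set (grid_V n) (grid_E n) m c i"
  shows "int (fst u) \<in> ivl (x_range (cat_run N (answer (grid_E n) m c) i))
    \<and> int (snd u) \<in> ivl (y_range (cat_run N (answer (grid_E n) m c) i))"
  using assms(5) trajectory_in_ranges[OF assms(1,2,4) assms(3)]
  unfolding possible_set_def by blast

lemma width_cat_round:
  "width (x_range (cat_round N i s b)) \<le>
     (if i mod 6 \<in> {1, 5} then (width (x_range s) + 3) div 2 else width (x_range s) + 2)"
  "width (y_range (cat_round N i s b)) \<le>
     (if i mod 6 \<in> {2, 4} then (width (y_range s) + 3) div 2 else width (y_range s) + 2)"
  by (simp_all add: cat_round_def width_halve_drift width_drift)

lemma ranges_narrow_after_cycles:
  assumes "3 * N < 4 ^ K"
  shows "width (x_range (cat_run N B (6 * K))) \<le> 8" "width (y_range (cat_run N B (6 * K))) \<le> 8"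
proof -
  have x: "4 * width (x_range (cat_run N B (6 * Suc k)))
      \<le> width (x_range (cat_run N B (6 * k))) + 25" for k
    by (rule six_round_contraction[of "\<lambda>i. width (x_range (cat_run N B i))" "{1, 5}"])
      (simp_all only: cat_run.simps width_cat_round(1) simp_thms)
  have y: "4 * width (y_range (cat_run N B (6 * Suc k)))
      \<le> width (y_range (cat_run N B (6 * k))) + 25" for k
    by (rule six_round_contraction[of "\<lambda>i. width (y_range (cat_run N B i))" "{2, 4}"])
      (simp_all only: cat_run.simps width_cat_round(2) simp_thms)
  show "width (x_range (cat_run N B (6 * K))) \<le> 8" "width (y_range (cat_run N B (6 * K))) \<le> 8"
    using contraction_reaches_8[of "\<lambda>k. width (x_range (cat_run N B (6 * k)))", OF x]
      contraction_reaches_8[of "\<lambda>k. width (y_range (cat_run N B (6 * k)))", OF y] assms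
    by (simp_all add: initial_state_def)
qed

definition first_probe :: "int \<Rightarrow> nat \<times> nat" where
  "first_probe N = to_vertex (next_probe N 0 (initial_state N))"

text \<open>The answers b_2, ..., b_i are given as a list, so b_j is its element j - 2; the answer
  substituted for b_1 is irrelevant because a phase-0 round does not use its answer.\<close>
definition cat_strategy :: "int \<Rightarrow> bool list \<Rightarrow> nat \<times> nat" where
  "cat_strategy N bs =
     to_vertex (next_probe N (Suc (length bs)) (cat_run N (\<lambda>j. bs ! (j - 2)) (Suc (length bs))))"

lemma is_strategy_cat_strategy:
  assumes "N = int n" "3 \<le> n"
  shows "is_strategy (grid_V n) (first_probe N) (cat_strategy N []) (cat_strategy N)"
proof -
  have probe_in_grid: "to_vertex (next_probe N i (cat_run N B j)) \<in> grid_V n" for i B j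
    using assms next_probe_in_box last_probe_cat_run_in_box by (simp add: to_vertex_in_grid)
  show ?thesis
    using probe_in_grid[of 0 _ 0] probe_in_grid
    by (simp add: is_strategy_def first_probe_def cat_strategy_def del: cat_run.simps(2))
qed

lemma probes_of_cat_strategy:
  assumes "follows E (first_probe N) (cat_strategy N []) (cat_strategy N) m c" "1 \<le> i"
  shows "c i = to_vertex (last_probe (cat_run N (answer E m c) i))"
proof (cases i)
  case (Suc j)
  show ?thesis
  proof (cases "j = 0")
    case True
    with Suc assms(1) show ?thesis
      by (simp add: follows_def first_probe_def cat_round_def)
  next
    case False
    let ?bs = "map (answer E m c) [2..<Suc j]"
    have len: "Suc (length ?bs) = j"
      using False by (simp del: upt_Suc)
    have "c (Suc j) = cat_strategy N ?bs"
      using assms(1) False by (cases "j = 1") (auto simp: follows_def numeral_2_eq_2)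
    also from len
    have "cat_strategy N ?bs = to_vertex (next_probe N j (cat_run N (\<lambda>k. ?bs ! (k - 2)) j))"
      unfolding cat_strategy_def by (simp only:)
    also have "cat_run N (\<lambda>k. ?bs ! (k - 2)) j = cat_run N (answer E m c) j"
    proof (rule cat_run_cong)
      fix k assume k: "2 \<le> k" "k \<le> j"
      then have "?bs ! (k - 2) = answer E m c (Suc (Suc (k - 2)))" by (simp del: upt_Suc)
      also have "Suc (Suc (k - 2)) = k" using k by arith
      finally show "?bs ! (k - 2) = answer E m c k" .
    qed
    finally show ?thesis
      using Suc by (simp add: cat_round_def)
  qed
qed (use assms(2) in simp)

lemma can_localize_grid_in_cycles:
  assumes n: "3 \<le> n" and K: "3 * int n < 4 ^ K"
  shows "can_localize (grid_V n) (grid_E n) 8 (6 * K)"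
proof -
  define N where "N = int n"
  have i: "1 \<le> 6 * K"
    using K n by (cases K) auto
  show ?thesis
    unfolding can_localize_def
  proof (rule exI[of _ "first_probe N"], rule exI[of _ "cat_strategy N []"],
      rule exI[of _ "cat_strategy N"], intro conjI allI impI)
    show "is_strategy (grid_V n) (first_probe N) (cat_strategy N []) (cat_strategy N)"
      using is_strategy_cat_strategy N_def n by simp
    fix m c
    assume "is_game (grid_V n) (grid_E n) m c \<and>
      follows (grid_E n) (first_probe N) (cat_strategy N []) (cat_strategy N) m c"
    then have game: "is_game (grid_V n) (grid_E n) m c"
      and probes: "\<And>j. 1 \<le> j \<Longrightarrow>
        c j = to_vertex (last_probe (cat_run N (answer (grid_E n) m c) j))"
      using probes_of_cat_strategy by auto
    let ?s = "cat_run N (answer (grid_E n) m c) (6 * K)"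
    let ?M = "possible_set (grid_V n) (grid_E n) m c (6 * K)"
    have sub: "?M \<subseteq> grid_V n" using i by (rule possible_set_subset)
    have "grad (grid_V n) (grid_E n) ?M \<le> 8"
    proof (rule grad_grid_le[OF sub])
      show "?M \<noteq> {}" using mouse_in_possible_set[OF game i] by auto
      show "int (fst p) \<in> ivl (x_range ?s) \<and> int (snd p) \<in> ivl (y_range ?s)" if "p \<in> ?M" for p
        using possible_set_in_ranges[OF N_def n i probes that] .
      have "width (x_range ?s) \<le> 8" "width (y_range ?s) \<le> 8"
        using ranges_narrow_after_cycles K N_def by auto
      then show "(width (x_range ?s) + 1) div 2 + (width (y_range ?s) + 1) div 2 \<le> int 8"
        by simp presburger
    qed
    with i show "\<exists>i. 1 \<le> i \<and> real i \<le> real (6 * K) \<and>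
        grad (grid_V n) (grid_E n) (possible_set (grid_V n) (grid_E n) m c i) \<le> 8"
      by (intro exI[of _ "6 * K"]) simp
  qed
qed

lemma exists_log_exponent_four_pow_gt:
  assumes "2 \<le> n"
  shows "\<exists>K. 3 * int n < 4 ^ K \<and> real K \<le> 4 * log 2 n"
proof
  define L where "L = nat \<lceil>log 2 n\<rceil>"
  have log_ge_1: "1 \<le> log 2 n" using assms by simp
  have L: "log 2 n \<le> real L" "real L \<le> log 2 n + 1"
    unfolding L_def using log_ge_1 by linarith+
  have "real n = 2 powr log 2 n" using assms by simp
  also have "\<dots> \<le> 2 powr real L" using L(1) by (intro powr_mono) auto
  also have "\<dots> = 2 ^ L" by (simp add: powr_realpow)
  finally have "n \<le> 2 ^ L" by (metis of_nat_le_iff of_nat_numeral of_nat_power)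
  moreover have "(2::nat) ^ L \<le> 4 ^ L" by (intro power_mono) auto
  ultimately have "3 * n < 16 * 4 ^ L"
    using zero_less_power[of "4::nat" L] by linarith
  then have "3 * n < 4 ^ (L + 2)" by (simp add: power_add)
  then have "3 * int n < 4 ^ (L + 2)"
    by (metis of_nat_less_iff of_nat_mult of_nat_numeral of_nat_power)
  moreover have "real (L + 2) \<le> 4 * log 2 n"
    using L(2) log_ge_1 by simp
  ultimately show "3 * int n < 4 ^ (L + 2) \<and> real (L + 2) \<le> 4 * log 2 n" ..
qed

theorem theorem2:
  shows "\<exists>C::real. C > 0 \<and>
    (\<forall>n::nat. n \<ge> 2 \<longrightarrow> can_localize (grid_V n) (grid_E n) 8 (C * ln (real n)))"
proof (intro exI conjI allI impI)
  show "(0::real) < 24 / ln 2" by simp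
  fix n :: nat
  assume n: "2 \<le> n"
  show "can_localize (grid_V n) (grid_E n) 8 (24 / ln 2 * ln (real n))"
  proof (cases "n = 2")
    case True
    then show ?thesis by (intro can_localize_small_grid) simp_all
  next
    case False
    obtain K where K: "3 * int n < 4 ^ K" "real K \<le> 4 * log 2 n"
      using exists_log_exponent_four_pow_gt[OF n] by blast
    have "real (6 * K) \<le> 24 / ln 2 * ln (real n)"
      using K(2) by (simp add: log_def)
    with False n K(1) show ?thesis
      by (intro can_localize_mono[OF can_localize_grid_in_cycles]) simp_all
  qed
qed

end
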